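(* The Krichever genus $kv\colon\varOmega^U_*\to R_*$, i.e. the ring homomorphism classifying the formal group law $F_b$, induces an isomorphism of graded abelian groups $\varOmega^U_{2i}\to R_{2i}$ for all $2i<10$.
   Context: $R_*=\mathbb{Z}[a,c_j,d_k:j\ge2,k\ge1]/J$ with $\deg a=2$, $\deg c_j=2j$, $\deg d_k=2(k+2)$, and $F_b(u_1,u_2)=u_1c(u_2)+u_2c(u_1)-au_1u_2-\frac{d(u_1)-d(u_2)}{u_1c(u_2)-u_2c(u_1)}u_1^2u_2^2$, where $c(u)=1+\sum_{j\ge2}c_ju^j$, $d(u)=\sum_{k\ge1}d_ku^k$, and $J$ is the ideal of associativity relations for $F_b$. By Quillen's theorem $\varOmega^U_*$ is the Lazard ring, so $F_b$ is classified by a unique graded ring homomorphism $\varOmega^U_*\to R_*$. *)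

theory Defs
  imports "HOL-Library.Poly_Mapping" "HOL-Computational_Algebra.Formal_Power_Series"
begin

type_synonym 'v mpoly = "('v \<Rightarrow>\<^sub>0 nat) \<Rightarrow>\<^sub>0 int"

definition Var :: "'v \<Rightarrow> 'v mpoly" where
  "Var v = Poly_Mapping.single (Poly_Mapping.single v 1) 1"

definition subst :: "('v \<Rightarrow> 'a::comm_ring_1) \<Rightarrow> 'v mpoly \<Rightarrow> 'a" where
  "subst \<sigma> p = (\<Sum>m\<in>Poly_Mapping.keys p.
      of_int (Poly_Mapping.lookup p m) * (\<Prod>v\<in>Poly_Mapping.keys m. \<sigma> v ^ Poly_Mapping.lookup m v))"

text \<open>Homogeneity w.r.t. a weight of the variables (weight n = topological degree 2n).\<close>
definition homog :: "('v \<Rightarrow> nat) \<Rightarrow> nat \<Rightarrow> 'v mpoly \<Rightarrow> bool" where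
  "homog wt n p \<longleftrightarrow> (\<forall>m\<in>Poly_Mapping.keys p.
      (\<Sum>v\<in>Poly_Mapping.keys m. Poly_Mapping.lookup m v * wt v) = n)"

definition gen_ideal :: "'a::comm_ring_1 set \<Rightarrow> 'a set" where
  "gen_ideal S = {x. \<exists>F g. finite F \<and> F \<subseteq> S \<and> x = (\<Sum>s\<in>F. g s * s)}"

text \<open>Two-variable series: element S of 'r fps fps, coefficient of u1^i u2^j is
  fps_nth (fps_nth S i) j. Three-variable series: 'r fps fps fps similarly.\<close>

definition coeff2 :: "'r fps fps \<Rightarrow> nat \<Rightarrow> nat \<Rightarrow> 'r" where
  "coeff2 S i j = fps_nth (fps_nth S i) j"

definition coeff3 :: "'r fps fps fps \<Rightarrow> nat \<Rightarrow> nat \<Rightarrow> nat \<Rightarrow> 'r" where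
  "coeff3 S p q r = fps_nth (fps_nth (fps_nth S p) q) r"

definition U3 :: "'r::comm_ring_1 fps fps fps" where "U3 = fps_X"
definition V3 :: "'r::comm_ring_1 fps fps fps" where "V3 = fps_const fps_X"
definition W3 :: "'r::comm_ring_1 fps fps fps" where "W3 = fps_const (fps_const fps_X)"

definition const3 :: "'r::comm_ring_1 \<Rightarrow> 'r fps fps fps" where
  "const3 r = fps_const (fps_const (fps_const r))"

text \<open>Truncated substitution of two 3-variable series G, H (without constant term)
  into a 2-variable series with coefficient function f (f 0 0 = 0). All terms of total
  degree at most N of the genuine composite F(G,H) are exact.\<close>
definition ev_trunc :: "nat \<Rightarrow> (nat \<Rightarrow> nat \<Rightarrow> 'r::comm_ring_1) \<Rightarrow> 'r fps fps fps \<Rightarrow> 'r fps fps fps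
    \<Rightarrow> 'r fps fps fps" where
  "ev_trunc N f G H = (\<Sum>i\<le>N. \<Sum>j\<le>N. const3 (f i j) * G ^ i * H ^ j)"

text \<open>Coefficient of u^p v^q w^r in F(F(u,v),w) - F(u,F(v,w)).\<close>
definition assoc_rel :: "(nat \<Rightarrow> nat \<Rightarrow> 'r::comm_ring_1) \<Rightarrow> nat \<Rightarrow> nat \<Rightarrow> nat \<Rightarrow> 'r" where
  "assoc_rel f p q r =
     (let N = p + q + r in
       coeff3 (ev_trunc N f (ev_trunc N f U3 V3) W3) p q r
     - coeff3 (ev_trunc N f U3 (ev_trunc N f V3 W3)) p q r)"

definition assoc_ideal :: "(nat \<Rightarrow> nat \<Rightarrow> 'r::comm_ring_1) \<Rightarrow> 'r set" where
  "assoc_ideal f = gen_ideal (range (\<lambda>(p, q, r). assoc_rel f p q r))"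

text \<open>Variables of R: A = a (deg 2), C n = c_(n+2) (deg 2(n+2)), D n = d_(n+1) (deg 2(n+3)).\<close>
datatype rvar = A | C nat | D nat

fun wtR :: "rvar \<Rightarrow> nat" where
  "wtR A = 1"
| "wtR (C n) = n + 2"
| "wtR (D n) = n + 3"

definition c_fps :: "rvar mpoly fps" where
  "c_fps = Abs_fps (\<lambda>n. if n = 0 then 1 else if n = 1 then 0 else Var (C (n - 2)))"

definition d_fps :: "rvar mpoly fps" where
  "d_fps = Abs_fps (\<lambda>n. if n = 0 then 0 else Var (D (n - 1)))"

definition in_u1 :: "'r::comm_ring_1 fps \<Rightarrow> 'r fps fps" where
  "in_u1 f = Abs_fps (\<lambda>i. fps_const (fps_nth f i))"

definition in_u2 :: "'r::comm_ring_1 fps \<Rightarrow> 'r fps fps" where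
  "in_u2 f = fps_const f"

definition X1 :: "'r::comm_ring_1 fps fps" where "X1 = fps_X"
definition X2 :: "'r::comm_ring_1 fps fps" where "X2 = fps_const fps_X"

text \<open>The power series (d(u1)-d(u2))/(u1 c(u2) - u2 c(u1)) (the quotient exists and is unique).\<close>
definition Qb :: "rvar mpoly fps fps" where
  "Qb = (THE Q. Q * (X1 * in_u2 c_fps - X2 * in_u1 c_fps) = in_u1 d_fps - in_u2 d_fps)"

definition Fb :: "rvar mpoly fps fps" where
  "Fb = X1 * in_u2 c_fps + X2 * in_u1 c_fps - fps_const (fps_const (Var A)) * X1 * X2
        - Qb * X1 ^ 2 * X2 ^ 2"

definition b :: "nat \<Rightarrow> nat \<Rightarrow> rvar mpoly" where
  "b i j = coeff2 Fb i j"

text \<open>J = ideal of associativity relations of F_b; R_* = Z[a,c_j,d_k]/J.\<close>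
definition J :: "rvar mpoly set" where
  "J = assoc_ideal b"

section \<open>The Lazard ring (= Omega^U_* by Quillen)\<close>

text \<open>Variable (i,j) stands for x_(i+1,j+1), the coefficient of u^(i+1) v^(j+1) of the
  universal formal group law; its weight is i+j+1 (topological degree 2(i+j+1)).\<close>
fun wtL :: "nat \<times> nat \<Rightarrow> nat" where
  "wtL (i, j) = i + j + 1"

definition gL :: "nat \<Rightarrow> nat \<Rightarrow> (nat \<times> nat) mpoly" where
  "gL i j = (if (i, j) = (1, 0) \<or> (i, j) = (0, 1) then 1
             else if 1 \<le> i \<and> 1 \<le> j then Var (i - 1, j - 1) else 0)"

definition I_Laz :: "(nat \<times> nat) mpoly set" where
  "I_Laz = gen_ideal (range (\<lambda>(p, q, r). assoc_rel gL p q r)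
                      \<union> {Var (i, j) - Var (j, i) | i j. True})"

text \<open>The Krichever genus kv on the level of representatives: x_(i,j) maps to b_(i,j).\<close>
definition kv :: "(nat \<times> nat) mpoly \<Rightarrow> rvar mpoly" where
  "kv = subst (\<lambda>(i, j). b (i + 1) (j + 1))"

text \<open>kv induces a bijection Omega^U_(2n) = L_n/(I cap L_n) -> R_(2n) = P_n/(J cap P_n):
  surjectivity and injectivity on the degree-n homogeneous parts.\<close>
definition kv_iso_in_degree :: "nat \<Rightarrow> bool" where
  "kv_iso_in_degree n \<longleftrightarrow>
     (\<forall>q. homog wtR n q \<longrightarrow> (\<exists>p. homog wtL n p \<and> kv p - q \<in> J))
   \<and> (\<forall>p. homog wtL n p \<longrightarrow> kv p \<in> J \<longrightarrow> p \<in> I_Laz)"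

end

theory Submission
  imports Defs
begin

(* In weights n <= 4 it is inverted by the substitution theta with
   a |-> -x_11, c_(j+2) |-> x_(1,j+2), d_(k+1) |-> -x_(2,k+2).
   Surjectivity: kv (theta v) = v for every variable v of weight <= 4, so a homogeneous q of
   weight n <= 4 equals kv (theta q).
   Injectivity rests on three facts.
   (1) Every associativity relation of F_b is homogeneous (the relation at u^p v^q w^r has
       weight p+q+r-1), so a homogeneous element of J of weight n lies in the ideal generated
       by the relations of weight <= n.
   (2) theta (b_ij) equals the universal coefficient x_ij up to the symmetry x_ij = x_ji as long
       as i+j <= 5; since a relation only involves coefficients of total degree <= p+q+r,
       theta maps the relations of weight <= 4 into the Lazard ideal I.
   (3) theta (kv p) = p modulo I for p of weight <= 4.
   Hence kv p in J forces p = theta (kv p) = 0 modulo I. *)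

unbundle fps_syntax

locale ring_hom_fn =
  fixes h :: "'a::comm_ring_1 \<Rightarrow> 'b::comm_ring_1"
  assumes h_add: "h (x + y) = h x + h y"
    and h_mult: "h (x * y) = h x * h y"
    and h_one: "h 1 = 1"
begin

lemma h_zero[simp]: "h 0 = 0"
  using h_add[of 0 0] by simp

lemma h_uminus: "h (- x) = - h x"
  using h_add[of x "-x"] by (simp add: eq_neg_iff_add_eq_0 add.commute)

lemma h_diff: "h (x - y) = h x - h y"
  using h_add[of x "-y"] by (simp add: h_uminus)

lemma h_power: "h (x ^ n) = h x ^ n"
  by (induction n) (simp_all add: h_one h_mult)

lemma h_sum: "h (sum f K) = (\<Sum>x\<in>K. h (f x))"
  by (induction K rule: infinite_finite_induct) (simp_all add: h_add)

lemma h_prod: "h (prod f K) = (\<Prod>x\<in>K. h (f x))"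
  by (induction K rule: infinite_finite_induct) (simp_all add: h_mult h_one)

lemma h_of_nat: "h (of_nat n) = of_nat n"
  by (induction n) (simp_all add: h_add h_one)

lemma h_of_int: "h (of_int k) = of_int k"
  by (cases k rule: int_cases) (simp_all add: h_of_nat h_uminus h_diff h_one)

lemmas h_simps = h_add h_mult h_one h_uminus h_diff h_power h_sum h_prod h_of_nat h_of_int

end

lemma ring_hom_fps_const: "ring_hom_fn fps_const"
  by unfold_locales simp_all

lemma gen_ideal_0: "0 \<in> gen_ideal S"
  unfolding gen_ideal_def by (rule CollectI, rule exI[of _ "{}"]) auto

lemma gen_ideal_gen: "s \<in> S \<Longrightarrow> s \<in> gen_ideal S"
  unfolding gen_ideal_def
  by (rule CollectI, rule exI[of _ "{s}"], rule exI[of _ "\<lambda>_. 1"]) auto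

lemma gen_ideal_add:
  assumes "x \<in> gen_ideal S" "y \<in> gen_ideal S"
  shows "x + y \<in> gen_ideal S"
proof -
  from assms obtain F g G k where F: "finite F" "F \<subseteq> S" "x = (\<Sum>s\<in>F. g s * s)"
    and G: "finite G" "G \<subseteq> S" "y = (\<Sum>s\<in>G. k s * s)"
    unfolding gen_ideal_def by blast
  let ?g = "\<lambda>s. (if s \<in> F then g s else 0) + (if s \<in> G then k s else 0)"
  have "x = (\<Sum>s\<in>F \<union> G. (if s \<in> F then g s else 0) * s)"
    using F G by (subst sum.mono_neutral_cong_right[of "F \<union> G" F]) auto
  moreover have "y = (\<Sum>s\<in>F \<union> G. (if s \<in> G then k s else 0) * s)"
    using F G by (subst sum.mono_neutral_cong_right[of "F \<union> G" G]) auto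
  ultimately have "x + y = (\<Sum>s\<in>F \<union> G. ?g s * s)"
    by (simp add: sum.distrib[symmetric] distrib_right)
  then show ?thesis
    unfolding gen_ideal_def using F G by (intro CollectI exI[of _ "F \<union> G"] exI[of _ ?g]) auto
qed

lemma gen_ideal_mult: "x \<in> gen_ideal S \<Longrightarrow> r * x \<in> gen_ideal S"
proof -
  assume "x \<in> gen_ideal S"
  then obtain F g where F: "finite F" "F \<subseteq> S" "x = (\<Sum>s\<in>F. g s * s)"
    unfolding gen_ideal_def by blast
  then have "r * x = (\<Sum>s\<in>F. (r * g s) * s)" by (simp add: sum_distrib_left mult.assoc)
  then show ?thesis
    unfolding gen_ideal_def using F by (intro CollectI exI[of _ F] exI[of _ "\<lambda>s. r * g s"]) auto
qed

lemma gen_ideal_diff: "x \<in> gen_ideal S \<Longrightarrow> y \<in> gen_ideal S \<Longrightarrow> x - y \<in> gen_ideal S"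
  using gen_ideal_add[of x S "-y"] gen_ideal_mult[of y S "-1"] by simp

lemma gen_ideal_sum: "(\<And>i. i \<in> K \<Longrightarrow> f i \<in> gen_ideal S) \<Longrightarrow> sum f K \<in> gen_ideal S"
  by (induction K rule: infinite_finite_induct) (auto intro: gen_ideal_0 gen_ideal_add)

lemma gen_ideal_cong_mult:
  assumes "x - x' \<in> gen_ideal S" "y - y' \<in> gen_ideal S"
  shows "x * y - x' * y' \<in> gen_ideal S"
proof -
  have "x * y - x' * y' = y * (x - x') + x' * (y - y')" by (simp add: algebra_simps)
  then show ?thesis using assms by (simp add: gen_ideal_add gen_ideal_mult)
qed

lemma gen_ideal_cong_prod:
  "(\<And>i. i \<in> K \<Longrightarrow> f i - g i \<in> gen_ideal S) \<Longrightarrow> prod f K - prod g K \<in> gen_ideal S"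
  by (induction K rule: infinite_finite_induct) (simp_all add: gen_ideal_0 gen_ideal_cong_mult)

lemma gen_ideal_cong_power: "x - y \<in> gen_ideal S \<Longrightarrow> x ^ n - y ^ n \<in> gen_ideal S"
  by (induction n) (simp_all add: gen_ideal_0 gen_ideal_cong_mult)

lemma (in ring_hom_fn) h_gen_ideal:
  assumes "\<And>s. s \<in> S \<Longrightarrow> h s \<in> gen_ideal T" and "x \<in> gen_ideal S"
  shows "h x \<in> gen_ideal T"
proof -
  from assms(2) obtain F g where F: "F \<subseteq> S" "x = (\<Sum>s\<in>F. g s * s)"
    unfolding gen_ideal_def by blast
  then have "h x = (\<Sum>s\<in>F. h (g s) * h s)" by (simp add: h_sum h_mult)
  also have "\<dots> \<in> gen_ideal T" using F assms(1) by (intro gen_ideal_sum gen_ideal_mult) auto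
  finally show ?thesis .
qed

definition monom_val :: "('v \<Rightarrow> 'a::comm_ring_1) \<Rightarrow> ('v \<Rightarrow>\<^sub>0 nat) \<Rightarrow> 'a" where
  "monom_val \<sigma> m = (\<Prod>v\<in>Poly_Mapping.keys m. \<sigma> v ^ Poly_Mapping.lookup m v)"

lemma subst_monom_val:
  "subst \<sigma> p = (\<Sum>m\<in>Poly_Mapping.keys p. of_int (Poly_Mapping.lookup p m) * monom_val \<sigma> m)"
  unfolding subst_def monom_val_def ..

lemma subst_superset:
  assumes "finite S" "Poly_Mapping.keys p \<subseteq> S"
  shows "subst \<sigma> p = (\<Sum>m\<in>S. of_int (Poly_Mapping.lookup p m) * monom_val \<sigma> m)"
  unfolding subst_monom_val using assms
  by (intro sum.mono_neutral_cong_left) (auto simp: in_keys_iff)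

lemma monom_val_superset:
  assumes "finite S" "Poly_Mapping.keys m \<subseteq> S"
  shows "monom_val \<sigma> m = (\<Prod>v\<in>S. \<sigma> v ^ Poly_Mapping.lookup m v)"
  unfolding monom_val_def using assms
  by (intro prod.mono_neutral_cong_left) (auto simp: in_keys_iff)

lemma monom_val_add: "monom_val \<sigma> (m1 + m2) = monom_val \<sigma> m1 * monom_val \<sigma> m2"
proof -
  let ?S = "Poly_Mapping.keys m1 \<union> Poly_Mapping.keys m2"
  have k: "Poly_Mapping.keys (m1 + m2) \<subseteq> ?S" by (rule keys_add)
  show ?thesis
    by (simp add: monom_val_superset[OF _ k] monom_val_superset[of ?S m1]
        monom_val_superset[of ?S m2] lookup_add power_add prod.distrib)
qed

lemma subst_add: "subst \<sigma> (p + q) = subst \<sigma> p + subst \<sigma> q"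
proof -
  let ?S = "Poly_Mapping.keys p \<union> Poly_Mapping.keys q"
  have k: "Poly_Mapping.keys (p + q) \<subseteq> ?S" by (rule keys_add)
  show ?thesis
    by (simp add: subst_superset[OF _ k] subst_superset[of ?S p] subst_superset[of ?S q]
        lookup_add sum.distrib distrib_right)
qed

lemma subst_sum: "subst \<sigma> (sum f K) = (\<Sum>x\<in>K. subst \<sigma> (f x))"
  by (induction K rule: infinite_finite_induct) (simp_all add: subst_add subst_def[of _ 0])

lemma subst_single: "subst \<sigma> (Poly_Mapping.single m c) = of_int c * monom_val \<sigma> m"
  by (cases "c = 0") (simp_all add: subst_def monom_val_def)

lemma poly_sum_terms:
  "p = (\<Sum>m\<in>Poly_Mapping.keys p. Poly_Mapping.single m (Poly_Mapping.lookup p m))"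
proof (rule poly_mapping_eqI)
  fix k
  show "Poly_Mapping.lookup p k =
      Poly_Mapping.lookup (\<Sum>m\<in>Poly_Mapping.keys p. Poly_Mapping.single m (Poly_Mapping.lookup p m)) k"
    by (cases "k \<in> Poly_Mapping.keys p")
       (simp_all add: lookup_sum lookup_single when_def in_keys_iff sum.delta)
qed

lemma subst_mult: "subst \<sigma> (p * q) = subst \<sigma> p * subst \<sigma> q"
proof -
  have "p * q = (\<Sum>m\<in>Poly_Mapping.keys p. \<Sum>n\<in>Poly_Mapping.keys q.
      Poly_Mapping.single m (Poly_Mapping.lookup p m) * Poly_Mapping.single n (Poly_Mapping.lookup q n))"
    by (subst poly_sum_terms[of p], subst poly_sum_terms[of q])
       (simp add: sum_distrib_left sum_distrib_right sum.swap[of _ "Poly_Mapping.keys q"])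
  then have "subst \<sigma> (p * q) = (\<Sum>m\<in>Poly_Mapping.keys p. \<Sum>n\<in>Poly_Mapping.keys q.
      (of_int (Poly_Mapping.lookup p m) * monom_val \<sigma> m) * (of_int (Poly_Mapping.lookup q n) * monom_val \<sigma> n))"
    by (simp add: subst_sum mult_single subst_single monom_val_add mult_ac)
  also have "\<dots> = subst \<sigma> p * subst \<sigma> q"
    by (simp add: subst_monom_val sum_distrib_left sum_distrib_right sum.swap[of _ "Poly_Mapping.keys q"])
  finally show ?thesis .
qed

lemma subst_one: "subst \<sigma> 1 = 1"
  using subst_single[of \<sigma> 0 1] by (simp add: monom_val_def)

lemma ring_hom_subst: "ring_hom_fn (subst \<sigma>)"
  by unfold_locales (simp_all add: subst_add subst_mult subst_one)

lemma subst_Var: "subst \<sigma> (Var v) = \<sigma> v"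
  by (cases "1 = (0::nat)") (simp_all add: Var_def subst_single monom_val_def)

lemma Var_power: "(Var v :: 'v mpoly) ^ k = Poly_Mapping.single (Poly_Mapping.single v k) 1"
proof (induction k)
  case (Suc k)
  have "Poly_Mapping.single v 1 + Poly_Mapping.single v k = Poly_Mapping.single v (Suc k)"
    by (metis single_add plus_1_eq_Suc)
  then show ?case using Suc by (simp add: Var_def mult_single)
qed simp

lemma prod_monic_monomials:
  "(\<Prod>v\<in>S. Poly_Mapping.single (g v) (1::int)) = Poly_Mapping.single (\<Sum>v\<in>S. g v) 1"
  by (induction S rule: infinite_finite_induct) (simp_all add: mult_single)

lemma monom_val_Var: "monom_val Var m = Poly_Mapping.single m 1"
proof -
  have "monom_val Var m = (\<Prod>v\<in>Poly_Mapping.keys m.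
      Poly_Mapping.single (Poly_Mapping.single v (Poly_Mapping.lookup m v)) (1::int))"
    by (simp add: monom_val_def Var_power)
  also have "\<dots> = Poly_Mapping.single
      (\<Sum>v\<in>Poly_Mapping.keys m. Poly_Mapping.single v (Poly_Mapping.lookup m v)) 1"
    by (rule prod_monic_monomials)
  also have "(\<Sum>v\<in>Poly_Mapping.keys m. Poly_Mapping.single v (Poly_Mapping.lookup m v)) = m"
    by (rule poly_sum_terms[symmetric])
  finally show ?thesis .
qed

lemma subst_Var_id: "subst Var p = p"
proof -
  have "subst Var p = (\<Sum>m\<in>Poly_Mapping.keys p. Poly_Mapping.single m (Poly_Mapping.lookup p m))"
    unfolding subst_monom_val monom_val_Var
    by (intro sum.cong refl) (simp add: mult_single flip: single_of_int)
  also have "\<dots> = p" by (rule poly_sum_terms[symmetric])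
  finally show ?thesis .
qed

lemma (in ring_hom_fn) h_subst: "h (subst \<sigma> p) = subst (\<lambda>v. h (\<sigma> v)) p"
  by (simp add: subst_def h_simps)

lemma subst_cong:
  assumes "\<And>m v. m \<in> Poly_Mapping.keys p \<Longrightarrow> v \<in> Poly_Mapping.keys m \<Longrightarrow> \<sigma>1 v = \<sigma>2 v"
  shows "subst \<sigma>1 p = subst \<sigma>2 p"
  unfolding subst_def using assms by (intro sum.cong refl arg_cong2[where f=times] prod.cong) auto

lemma subst_cong_ideal:
  assumes "\<And>m v. m \<in> Poly_Mapping.keys p \<Longrightarrow> v \<in> Poly_Mapping.keys m \<Longrightarrow>
      \<sigma>1 v - \<sigma>2 v \<in> gen_ideal S"
  shows "subst \<sigma>1 p - subst \<sigma>2 p \<in> gen_ideal S"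
proof -
  have "subst \<sigma>1 p - subst \<sigma>2 p = (\<Sum>m\<in>Poly_Mapping.keys p.
      of_int (Poly_Mapping.lookup p m) * (monom_val \<sigma>1 m - monom_val \<sigma>2 m))"
    by (simp add: subst_monom_val sum_subtractf[symmetric] right_diff_distrib)
  also have "\<dots> \<in> gen_ideal S"
    unfolding monom_val_def using assms
    by (intro gen_ideal_sum gen_ideal_mult gen_ideal_cong_prod gen_ideal_cong_power) auto
  finally show ?thesis .
qed

section \<open>Gradings by weights\<close>

definition mweight :: "('v \<Rightarrow> nat) \<Rightarrow> ('v \<Rightarrow>\<^sub>0 nat) \<Rightarrow> nat" where
  "mweight wt m = (\<Sum>v\<in>Poly_Mapping.keys m. Poly_Mapping.lookup m v * wt v)"

lemma homog_iff_mweight: "homog wt n p \<longleftrightarrow> (\<forall>m\<in>Poly_Mapping.keys p. mweight wt m = n)"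
  by (simp add: homog_def mweight_def)

lemma homog_var_le:
  assumes "homog wt n p" "m \<in> Poly_Mapping.keys p" "v \<in> Poly_Mapping.keys m"
  shows "wt v \<le> n"
proof -
  have one: "1 \<le> Poly_Mapping.lookup m v" using assms(3) by (simp add: in_keys_iff)
  have "wt v \<le> Poly_Mapping.lookup m v * wt v" using mult_le_mono1[OF one] by simp
  also have "\<dots> \<le> mweight wt m"
    unfolding mweight_def using assms(3) by (intro member_le_sum) auto
  also have "\<dots> = n" using assms(1,2) by (simp add: homog_iff_mweight)
  finally show ?thesis .
qed

lemma monom_val_scaled:
  "monom_val (\<lambda>v. fps_const (\<beta> v) * fps_X ^ wt v) m = fps_const (monom_val \<beta> m) * fps_X ^ mweight wt m"
proof -
  have "monom_val (\<lambda>v. fps_const (\<beta> v) * fps_X ^ wt v) m =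
     (\<Prod>v\<in>Poly_Mapping.keys m. fps_const (\<beta> v ^ Poly_Mapping.lookup m v) *
        fps_X ^ (Poly_Mapping.lookup m v * wt v))"
    unfolding monom_val_def
    by (intro prod.cong refl) (simp add: power_mult_distrib mult.commute flip: power_mult)
  also have "\<dots> = fps_const (monom_val \<beta> m) * fps_X ^ mweight wt m"
    by (simp add: prod.distrib monom_val_def mweight_def power_sum
        ring_hom_fn.h_prod[OF ring_hom_fps_const, symmetric])
  finally show ?thesis .
qed

lemma subst_scaled_homog:
  assumes "homog wt n p"
  shows "subst (\<lambda>v. fps_const (\<beta> v) * fps_X ^ wt v) p = fps_const (subst \<beta> p) * fps_X ^ n"
proof -
  have "subst (\<lambda>v. fps_const (\<beta> v) * fps_X ^ wt v) p =
     (\<Sum>m\<in>Poly_Mapping.keys p. of_int (Poly_Mapping.lookup p m) * (fps_const (monom_val \<beta> m) * fps_X ^ n))"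
    using assms by (simp add: subst_monom_val monom_val_scaled homog_iff_mweight)
  also have "\<dots> = fps_const (subst \<beta> p) * fps_X ^ n"
    by (simp add: subst_monom_val ring_hom_fn.h_sum[OF ring_hom_fps_const] sum_distrib_right
        fps_of_int[symmetric] mult.assoc flip: fps_const_mult)
  finally show ?thesis .
qed

text \<open>The grading homomorphism: p |-> sum of its weight-n parts times t^n.\<close>
definition grade :: "('v \<Rightarrow> nat) \<Rightarrow> 'v mpoly \<Rightarrow> 'v mpoly fps" where
  "grade wt = subst (\<lambda>v. fps_const (Var v) * fps_X ^ wt v)"

lemma ring_hom_grade: "ring_hom_fn (grade wt)"
  unfolding grade_def by (rule ring_hom_subst)

lemma grade_0[simp]: "grade wt 0 = 0" and grade_1[simp]: "grade wt 1 = 1"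
  by (simp_all add: ring_hom_fn.h_zero[OF ring_hom_grade] ring_hom_fn.h_one[OF ring_hom_grade])

lemma grade_Var: "grade wt (Var v) = fps_const (Var v) * fps_X ^ wt v"
  by (simp add: grade_def subst_Var)

lemma fps_const_X_power_nth: "(fps_const x * fps_X ^ k) $ j = (if j = k then x else 0)"
  by (simp add: fps_X_power_mult_right_nth)

lemma homog_iff_grade: "homog wt n p \<longleftrightarrow> grade wt p = fps_const p * fps_X ^ n"
proof
  assume "homog wt n p"
  then show "grade wt p = fps_const p * fps_X ^ n"
    unfolding grade_def by (simp add: subst_scaled_homog subst_Var_id)
next
  assume eq: "grade wt p = fps_const p * fps_X ^ n"
  show "homog wt n p"
    unfolding homog_iff_mweight
  proof
    fix m0 assume m0: "m0 \<in> Poly_Mapping.keys p"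
    have terms: "grade wt p = (\<Sum>m\<in>Poly_Mapping.keys p.
        fps_const (Poly_Mapping.single m (Poly_Mapping.lookup p m)) * fps_X ^ mweight wt m)"
      unfolding grade_def subst_monom_val monom_val_scaled monom_val_Var
      by (intro sum.cong refl)
         (simp add: fps_of_int[symmetric] mult.assoc[symmetric] mult_single flip: single_of_int)
    have "Poly_Mapping.lookup (grade wt p $ mweight wt m0) m0 =
        (\<Sum>m\<in>Poly_Mapping.keys p. if m = m0 then Poly_Mapping.lookup p m else 0)"
      unfolding terms fps_sum_nth fps_const_X_power_nth lookup_sum
      by (intro sum.cong refl) (auto simp: lookup_single)
    also have "\<dots> = Poly_Mapping.lookup p m0" using m0 by simp
    finally have "Poly_Mapping.lookup p m0 =
        (if mweight wt m0 = n then Poly_Mapping.lookup p m0 else 0)"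
      unfolding eq fps_const_X_power_nth by (simp split: if_splits)
    then show "mweight wt m0 = n" using m0 by (auto simp: in_keys_iff split: if_splits)
  qed
qed

lemma nth_mult_monom:
  "(f * (fps_const s * fps_X ^ k)) $ n = (if k \<le> n then f $ (n - k) * s else 0)"
proof -
  have "f * (fps_const s * fps_X ^ k) = (f * fps_const s) * fps_X ^ k" by (simp add: mult.assoc)
  then show ?thesis by (simp add: fps_X_power_mult_right_nth)
qed

lemma homog_in_graded_ideal:
  fixes G :: "'a::comm_ring_1 \<Rightarrow> 'a fps" and gen :: "'i \<Rightarrow> 'a"
  assumes "ring_hom_fn G"
    and gen_homog: "\<And>i. G (gen i) = fps_const (gen i) * fps_X ^ deg i"
    and x_homog: "G x = fps_const x * fps_X ^ n"
    and "x \<in> gen_ideal (range gen)"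
  shows "x \<in> gen_ideal (gen ` {i. deg i \<le> n})"
proof -
  interpret ring_hom_fn G by fact
  obtain F g where F: "F \<subseteq> range gen" and x: "x = (\<Sum>s\<in>F. g s * s)"
    using assms(4) unfolding gen_ideal_def by blast
  define idx where "idx s = (SOME i. gen i = s)" for s
  have idx: "gen (idx s) = s" if "s \<in> F" for s
    using F that unfolding idx_def by (metis (mono_tags) rangeE subsetD someI)
  have "x = G x $ n" using x_homog by (simp add: fps_const_X_power_nth)
  also have "\<dots> = (\<Sum>s\<in>F. (G (g s) * G s) $ n)" by (simp add: x h_sum h_mult fps_sum_nth)
  also have "\<dots> = (\<Sum>s\<in>F. if deg (idx s) \<le> n then G (g s) $ (n - deg (idx s)) * s else 0)"
    by (intro sum.cong refl) (metis idx gen_homog nth_mult_monom)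
  also have "\<dots> \<in> gen_ideal (gen ` {i. deg i \<le> n})"
  proof (intro gen_ideal_sum)
    fix s assume "s \<in> F"
    then have "deg (idx s) \<le> n \<Longrightarrow> s \<in> gen ` {i. deg i \<le> n}"
      using idx by (metis (mono_tags) image_eqI mem_Collect_eq)
    then show "(if deg (idx s) \<le> n then G (g s) $ (n - deg (idx s)) * s else 0)
        \<in> gen_ideal (gen ` {i. deg i \<le> n})"
      by (auto intro: gen_ideal_0 gen_ideal_mult gen_ideal_gen)
  qed
  finally show ?thesis .
qed

definition coeff_map :: "'b::comm_ring_1 \<Rightarrow> ('a::comm_ring_1 \<Rightarrow> 'b) \<Rightarrow> 'a fps \<Rightarrow> 'b fps" where
  "coeff_map c h f = Abs_fps (\<lambda>n. h (f $ n) * c ^ n)"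

lemma coeff_map_nth[simp]: "coeff_map c h f $ n = h (f $ n) * c ^ n"
  by (simp add: coeff_map_def)

lemma ring_hom_coeff_map: assumes "ring_hom_fn h" shows "ring_hom_fn (coeff_map c h)"
proof
  interpret ring_hom_fn h by fact
  fix x y :: "'a fps"
  show "coeff_map c h (x + y) = coeff_map c h x + coeff_map c h y"
    by (rule fps_ext) (simp add: h_add distrib_right)
  show "coeff_map c h (x * y) = coeff_map c h x * coeff_map c h y"
  proof (rule fps_ext)
    fix n
    have "coeff_map c h (x * y) $ n = (\<Sum>i=0..n. h (x $ i) * h (y $ (n - i)) * c ^ n)"
      by (simp add: fps_mult_nth h_sum h_mult sum_distrib_right)
    also have "\<dots> = (\<Sum>i=0..n. (h (x $ i) * c ^ i) * (h (y $ (n - i)) * c ^ (n - i)))"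
    proof (intro sum.cong refl)
      fix i assume "i \<in> {0..n}"
      then have "c ^ n = c ^ i * c ^ (n - i)" by (simp flip: power_add)
      then show "h (x $ i) * h (y $ (n - i)) * c ^ n = (h (x $ i) * c ^ i) * (h (y $ (n - i)) * c ^ (n - i))"
        by (simp add: algebra_simps)
    qed
    also have "\<dots> = (coeff_map c h x * coeff_map c h y) $ n" by (simp add: fps_mult_nth)
    finally show "coeff_map c h (x * y) $ n = (coeff_map c h x * coeff_map c h y) $ n" .
  qed
  show "coeff_map c h 1 = 1"
    by (rule fps_ext) (simp add: h_one)
qed

definition coeff_map3 :: "'b \<Rightarrow> 'b \<Rightarrow> 'b \<Rightarrow> ('a::comm_ring_1 \<Rightarrow> 'b::comm_ring_1)
     \<Rightarrow> 'a fps fps fps \<Rightarrow> 'b fps fps fps" where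
  "coeff_map3 c0 c1 c2 h = coeff_map (fps_const (fps_const c2)) (coeff_map (fps_const c1) (coeff_map c0 h))"

lemma ring_hom_coeff_map3: "ring_hom_fn h \<Longrightarrow> ring_hom_fn (coeff_map3 c0 c1 c2 h)"
  unfolding coeff_map3_def by (intro ring_hom_coeff_map)

lemma coeff3_coeff_map3:
  "coeff3 (coeff_map3 c0 c1 c2 h S) p q r = h (coeff3 S p q r) * c0 ^ r * c1 ^ q * c2 ^ p"
  by (simp add: coeff_map3_def coeff3_def fps_const_power)

lemma ext3: "(\<And>p q r. coeff3 S p q r = coeff3 T p q r) \<Longrightarrow> S = T"
  unfolding coeff3_def by (intro fps_ext) auto

lemma coeff3_add[simp]: "coeff3 (S + T) p q r = coeff3 S p q r + coeff3 T p q r"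
  by (simp add: coeff3_def)
lemma coeff3_diff[simp]: "coeff3 (S - T) p q r = coeff3 S p q r - coeff3 T p q r"
  by (simp add: coeff3_def)
lemma coeff3_zero[simp]: "coeff3 0 p q r = 0"
  by (simp add: coeff3_def)
lemma coeff3_sum: "coeff3 (sum f SS) p q r = (\<Sum>x\<in>SS. coeff3 (f x) p q r)"
  by (simp add: coeff3_def fps_sum_nth)
lemma coeff3_const3_mult[simp]: "coeff3 (const3 x * S) p q r = x * coeff3 S p q r"
  by (simp add: coeff3_def const3_def)
lemma coeff3_U3_mult[simp]: "coeff3 (U3 * S) p q r = (if p = 0 then 0 else coeff3 S (p - 1) q r)"
  by (simp add: coeff3_def U3_def)
lemma coeff3_V3_mult[simp]: "coeff3 (V3 * S) p q r = (if q = 0 then 0 else coeff3 S p (q - 1) r)"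
  by (simp add: coeff3_def V3_def)
lemma coeff3_W3_mult[simp]: "coeff3 (W3 * S) p q r = (if r = 0 then 0 else coeff3 S p q (r - 1))"
  by (simp add: coeff3_def W3_def)
lemma coeff3_one: "coeff3 1 p q r = (if p = 0 \<and> q = 0 \<and> r = 0 then 1 else 0)"
  by (simp add: coeff3_def)
lemma coeff3_const3: "coeff3 (const3 x) p q r = (if p = 0 \<and> q = 0 \<and> r = 0 then x else 0)"
  using coeff3_const3_mult[of x 1 p q r] by (simp add: coeff3_one)
lemma coeff3_U3: "coeff3 U3 p q r = (if p = 1 \<and> q = 0 \<and> r = 0 then 1 else 0)"
  using coeff3_U3_mult[of 1 p q r] by (auto simp: coeff3_one)
lemma coeff3_V3: "coeff3 V3 p q r = (if p = 0 \<and> q = 1 \<and> r = 0 then 1 else 0)"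
  using coeff3_V3_mult[of 1 p q r] by (auto simp: coeff3_one)
lemma coeff3_W3: "coeff3 W3 p q r = (if p = 0 \<and> q = 0 \<and> r = 1 then 1 else 0)"
  using coeff3_W3_mult[of 1 p q r] by (auto simp: coeff3_one)

lemma const3_mult: "const3 (x * y) = const3 x * const3 y"
  by (simp add: const3_def)
lemma const3_power: "const3 (x ^ k) = const3 x ^ k"
  by (simp add: const3_def fps_const_power)

lemma const3_zero[simp]: "const3 0 = 0"
  by (simp add: const3_def)

lemma coeff3_mult: "coeff3 (S * T) p q r =
  (\<Sum>a=0..p. \<Sum>b'=0..q. \<Sum>c=0..r. coeff3 S a b' c * coeff3 T (p - a) (q - b') (r - c))"
  by (simp add: coeff3_def fps_mult_nth fps_sum_nth)

lemma ev_trunc_hom: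
  assumes "ring_hom_fn \<phi>" "\<And>x. \<phi> (const3 x) = const3 (h x)"
  shows "\<phi> (ev_trunc N f G H) = ev_trunc N (\<lambda>i j. h (f i j)) (\<phi> G) (\<phi> H)"
  unfolding ev_trunc_def using assms by (simp add: ring_hom_fn.h_sum ring_hom_fn.h_mult ring_hom_fn.h_power)

lemma coeff_map3_const3: "ring_hom_fn h \<Longrightarrow> coeff_map3 c0 c1 c2 h (const3 x) = const3 (h x)"
  by (rule ext3) (simp add: coeff3_coeff_map3 coeff3_const3 ring_hom_fn.h_zero)

lemma coeff_map3_id_U3: "ring_hom_fn h \<Longrightarrow> coeff_map3 1 1 1 h U3 = U3"
  by (rule ext3) (simp add: coeff3_coeff_map3 coeff3_U3 ring_hom_fn.h_zero ring_hom_fn.h_one)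
lemma coeff_map3_id_V3: "ring_hom_fn h \<Longrightarrow> coeff_map3 1 1 1 h V3 = V3"
  by (rule ext3) (simp add: coeff3_coeff_map3 coeff3_V3 ring_hom_fn.h_zero ring_hom_fn.h_one)
lemma coeff_map3_id_W3: "ring_hom_fn h \<Longrightarrow> coeff_map3 1 1 1 h W3 = W3"
  by (rule ext3) (simp add: coeff3_coeff_map3 coeff3_W3 ring_hom_fn.h_zero ring_hom_fn.h_one)

lemma assoc_rel_hom:
  assumes "ring_hom_fn h"
  shows "h (assoc_rel f p q r) = assoc_rel (\<lambda>i j. h (f i j)) p q r"
proof -
  let ?\<phi> = "coeff_map3 1 1 1 h"
  have r: "ring_hom_fn ?\<phi>" using assms by (rule ring_hom_coeff_map3)
  have c: "\<And>x. ?\<phi> (const3 x) = const3 (h x)" using assms by (rule coeff_map3_const3)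
  have "\<And>S. h (coeff3 S p q r) = coeff3 (?\<phi> S) p q r" by (simp add: coeff3_coeff_map3)
  then show ?thesis
    unfolding assoc_rel_def Let_def
    using assms by (simp add: ring_hom_fn.h_diff ev_trunc_hom[OF r c]
        coeff_map3_id_U3 coeff_map3_id_V3 coeff_map3_id_W3)
qed

section \<open>Associativity relations depend only on low coefficients\<close>

definition order3 :: "nat \<Rightarrow> 'a::comm_ring_1 fps fps fps \<Rightarrow> bool" where
  "order3 k S \<longleftrightarrow> (\<forall>p q r. p + q + r < k \<longrightarrow> coeff3 S p q r = 0)"

lemma order3_0: "order3 0 S" by (simp add: order3_def)
lemma order3_mono: "order3 k S \<Longrightarrow> l \<le> k \<Longrightarrow> order3 l S" by (simp add: order3_def)
lemma order3_zero: "order3 k 0" by (simp add: order3_def)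
lemma order3_add: "order3 k S \<Longrightarrow> order3 k T \<Longrightarrow> order3 k (S + T)" by (simp add: order3_def)
lemma order3_sum: "(\<And>x. x \<in> SS \<Longrightarrow> order3 k (f x)) \<Longrightarrow> order3 k (sum f SS)"
  by (simp add: order3_def coeff3_sum)
lemma order3_const3_mult: "order3 k S \<Longrightarrow> order3 k (const3 x * S)" by (simp add: order3_def)

lemma order3_mult:
  assumes "order3 k S" "order3 l T" shows "order3 (k + l) (S * T)"
  unfolding order3_def
proof (intro allI impI)
  fix p q r assume pqr: "p + q + r < k + l"
  show "coeff3 (S * T) p q r = 0"
    unfolding coeff3_mult
  proof (intro sum.neutral ballI)
    fix a b' c assume "a \<in> {0..p}" "b' \<in> {0..q}" "c \<in> {0..r}"
    then have le: "a \<le> p" "b' \<le> q" "c \<le> r" by auto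
    show "coeff3 S a b' c * coeff3 T (p - a) (q - b') (r - c) = 0"
    proof (cases "a + b' + c < k")
      case True then show ?thesis using assms(1) by (simp add: order3_def)
    next
      case False
      then have "(p - a) + (q - b') + (r - c) < l" using pqr le by linarith
      then show ?thesis using assms(2) by (simp add: order3_def)
    qed
  qed
qed

lemma order3_power: "order3 1 S \<Longrightarrow> order3 i (S ^ i)"
proof (induction i)
  case 0 show ?case by (rule order3_0)
next
  case (Suc i) then show ?case using order3_mult[of 1 S i "S ^ i"] by simp
qed

lemma order3_U3: "order3 1 U3" by (simp add: order3_def coeff3_U3)
lemma order3_V3: "order3 1 V3" by (simp add: order3_def coeff3_V3)
lemma order3_W3: "order3 1 W3" by (simp add: order3_def coeff3_W3)

lemma order3_ev:
  assumes f0: "f 0 0 = 0" and G: "order3 1 G" and H: "order3 1 H"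
  shows "order3 1 (ev_trunc N f G H)"
  unfolding ev_trunc_def
proof (intro order3_sum)
  fix i j
  show "order3 1 (const3 (f i j) * G ^ i * H ^ j)"
  proof (cases "i + j = 0")
    case True then show ?thesis using f0 by (simp add: order3_zero)
  next
    case False
    have o: "order3 (i + j) (G ^ i * H ^ j)" by (intro order3_mult order3_power G H)
    have "order3 1 (G ^ i * H ^ j)" by (rule order3_mono[OF o]) (use False in linarith)
    then show ?thesis using order3_const3_mult by (simp add: mult.assoc)
  qed
qed

lemma order3_pow_diff:
  assumes "order3 1 S" "order3 1 S'" "order3 k (S - S')"
  shows "order3 k (S ^ i - S' ^ i)"
proof (induction i)
  case 0 then show ?case by (simp add: order3_zero)
next
  case (Suc i)
  have eq: "S ^ Suc i - S' ^ Suc i = S * (S ^ i - S' ^ i) + (S - S') * S' ^ i"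
    by (simp add: algebra_simps)
  have 1: "order3 k (S * (S ^ i - S' ^ i))"
    using order3_mult[OF assms(1) Suc] by (rule order3_mono) simp
  have 2: "order3 k ((S - S') * S' ^ i)"
    using order3_mult[OF assms(3) order3_power[OF assms(2)]] by (rule order3_mono) simp
  show ?case unfolding eq by (rule order3_add[OF 1 2])
qed

lemma ev_trunc_coeff_cong:
  assumes eq: "\<And>i j. i + j \<le> N \<Longrightarrow> f i j = g i j" and G: "order3 1 G" and H: "order3 1 H"
  shows "order3 (N + 1) (ev_trunc N f G H - ev_trunc N g G H)"
proof -
  have "ev_trunc N f G H - ev_trunc N g G H =
     (\<Sum>i\<le>N. \<Sum>j\<le>N. const3 (f i j - g i j) * G ^ i * H ^ j)"
    by (simp add: ev_trunc_def sum_subtractf[symmetric] const3_def algebra_simps flip: fps_const_sub)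
  also have "order3 (N + 1) \<dots>"
  proof (intro order3_sum)
    fix i j
    show "order3 (N + 1) (const3 (f i j - g i j) * G ^ i * H ^ j)"
    proof (cases "i + j \<le> N")
      case True then show ?thesis using eq by (simp add: order3_zero)
    next
      case False
      have o: "order3 (i + j) (G ^ i * H ^ j)" by (intro order3_mult order3_power G H)
      have "order3 (N + 1) (G ^ i * H ^ j)" by (rule order3_mono[OF o]) (use False in linarith)
      then show ?thesis using order3_const3_mult by (simp add: mult.assoc)
    qed
  qed
  finally show ?thesis .
qed

lemma ev_trunc_arg_cong:
  assumes G: "order3 1 G" "order3 1 G'" "order3 k (G - G')"
    and H: "order3 1 H" "order3 1 H'" "order3 k (H - H')"
  shows "order3 k (ev_trunc N g G H - ev_trunc N g G' H')"
proof -
  have "ev_trunc N g G H - ev_trunc N g G' H' =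
     (\<Sum>i\<le>N. \<Sum>j\<le>N. const3 (g i j) * ((G ^ i - G' ^ i) * H ^ j + G' ^ i * (H ^ j - H' ^ j)))"
    by (simp add: ev_trunc_def sum_subtractf[symmetric] algebra_simps)
  also have "order3 k \<dots>"
  proof (intro order3_sum order3_const3_mult order3_add)
    fix i j
    show "order3 k ((G ^ i - G' ^ i) * H ^ j)"
      using order3_mult[OF order3_pow_diff[OF G] order3_power[OF H(1)]] by (rule order3_mono) simp
    show "order3 k (G' ^ i * (H ^ j - H' ^ j))"
      using order3_mult[OF order3_power[OF G(2)] order3_pow_diff[OF H]] by (rule order3_mono) simp
  qed
  finally show ?thesis .
qed

lemma ev_trunc_low_cong:
  assumes eq: "\<And>i j. i + j \<le> N \<Longrightarrow> f i j = g i j"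
    and G: "order3 1 G" "order3 1 G'" "order3 (N + 1) (G - G')"
    and H: "order3 1 H" "order3 1 H'" "order3 (N + 1) (H - H')"
  shows "order3 (N + 1) (ev_trunc N f G H - ev_trunc N g G' H')"
proof -
  have "order3 (N + 1) (ev_trunc N f G H - ev_trunc N g G H)"
    by (rule ev_trunc_coeff_cong[OF eq G(1) H(1)])
  moreover have "order3 (N + 1) (ev_trunc N g G H - ev_trunc N g G' H')"
    by (rule ev_trunc_arg_cong[OF G H])
  ultimately show ?thesis using order3_add by fastforce
qed

lemma assoc_rel_low:
  assumes f0: "f 0 0 = 0" and g0: "g 0 0 = 0"
    and eq: "\<And>i j. i + j \<le> p + q + r \<Longrightarrow> f i j = g i j"
  shows "assoc_rel f p q r = assoc_rel g p q r"
proof -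
  let ?N = "p + q + r"
  have refl: "order3 (?N + 1) (S - S)" for S :: "'a fps fps fps" by (simp add: order3_zero)
  have o1: "order3 1 (ev_trunc ?N f U3 V3)" "order3 1 (ev_trunc ?N g U3 V3)"
     "order3 1 (ev_trunc ?N f V3 W3)" "order3 1 (ev_trunc ?N g V3 W3)"
    by (intro order3_ev f0 g0 order3_U3 order3_V3 order3_W3)+
  have inner: "order3 (?N + 1) (ev_trunc ?N f U3 V3 - ev_trunc ?N g U3 V3)"
    "order3 (?N + 1) (ev_trunc ?N f V3 W3 - ev_trunc ?N g V3 W3)"
    by (intro ev_trunc_low_cong eq order3_U3 order3_V3 order3_W3 refl; simp)+
  have "order3 (?N + 1)
      (ev_trunc ?N f (ev_trunc ?N f U3 V3) W3 - ev_trunc ?N g (ev_trunc ?N g U3 V3) W3)"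
    by (intro ev_trunc_low_cong eq o1 inner order3_W3 refl; simp)
  then have "coeff3 (ev_trunc ?N f (ev_trunc ?N f U3 V3) W3) p q r =
      coeff3 (ev_trunc ?N g (ev_trunc ?N g U3 V3) W3) p q r"
    unfolding order3_def by simp
  moreover have "order3 (?N + 1)
      (ev_trunc ?N f U3 (ev_trunc ?N f V3 W3) - ev_trunc ?N g U3 (ev_trunc ?N g V3 W3))"
    by (intro ev_trunc_low_cong eq o1 inner order3_U3 refl; simp)
  then have "coeff3 (ev_trunc ?N f U3 (ev_trunc ?N f V3 W3)) p q r =
      coeff3 (ev_trunc ?N g U3 (ev_trunc ?N g V3 W3)) p q r"
    unfolding order3_def by simp
  ultimately show ?thesis unfolding assoc_rel_def Let_def by simp
qed

section \<open>Homogeneity of the associativity relations\<close>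

text \<open>The substitution u |-> t u, v |-> t v, w |-> t w with a new variable t.\<close>
abbreviation scale3 :: "'a::comm_ring_1 fps fps fps \<Rightarrow> 'a fps fps fps fps" where
  "scale3 \<equiv> coeff_map3 fps_X fps_X fps_X fps_const"

lemma coeff3_scale3: "coeff3 (scale3 S) p q r = fps_const (coeff3 S p q r) * fps_X ^ (p + q + r)"
  by (simp add: coeff3_coeff_map3 power_add algebra_simps)

lemma scale3_U3: "scale3 U3 = const3 fps_X * (U3 :: 'a::comm_ring_1 fps fps fps fps)"
  by (rule ext3) (auto simp: coeff3_scale3 coeff3_U3)
lemma scale3_V3: "scale3 V3 = const3 fps_X * (V3 :: 'a::comm_ring_1 fps fps fps fps)"
  by (rule ext3) (auto simp: coeff3_scale3 coeff3_V3)
lemma scale3_W3: "scale3 W3 = const3 fps_X * (W3 :: 'a::comm_ring_1 fps fps fps fps)"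
  by (rule ext3) (auto simp: coeff3_scale3 coeff3_W3)

lemma ev_trunc_scale:
  fixes f :: "nat \<Rightarrow> nat \<Rightarrow> 'a::comm_ring_1"
  assumes f0: "f 0 0 = 0"
  shows "ev_trunc N (\<lambda>i j. fps_const (f i j)) (const3 fps_X * G) (const3 fps_X * H) =
    const3 fps_X * ev_trunc N (\<lambda>i j. fps_const (f i j) * fps_X ^ (i + j - 1)) G H"
  unfolding ev_trunc_def sum_distrib_left
proof (intro sum.cong refl)
  fix i j
  show "const3 (fps_const (f i j)) * (const3 fps_X * G) ^ i * (const3 fps_X * H) ^ j =
     const3 fps_X * (const3 (fps_const (f i j) * fps_X ^ (i + j - 1)) * G ^ i * H ^ j)"
  proof (cases "i + j = 0")
    case True then show ?thesis using f0 by simp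
  next
    case False
    then have eq: "(const3 (fps_X::'a fps) ^ i * const3 fps_X ^ j) = const3 fps_X * const3 fps_X ^ (i + j - 1)"
      by (simp flip: power_add power_Suc)
    have "const3 (fps_const (f i j)) * (const3 fps_X * G) ^ i * (const3 fps_X * H) ^ j
       = const3 (fps_const (f i j)) * (const3 (fps_X::'a fps) ^ i * const3 fps_X ^ j) * G ^ i * H ^ j"
      by (simp add: power_mult_distrib mult_ac)
    also have "\<dots> = const3 (fps_const (f i j)) * (const3 fps_X * const3 fps_X ^ (i + j - 1)) * G ^ i * H ^ j"
      by (simp only: eq)
    also have "\<dots> = const3 fps_X * (const3 (fps_const (f i j) * fps_X ^ (i + j - 1)) * G ^ i * H ^ j)"
      by (simp add: const3_mult const3_power mult_ac)
    finally show ?thesis .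
  qed
qed

lemma assoc_rel_scale:
  fixes f :: "nat \<Rightarrow> nat \<Rightarrow> 'a::comm_ring_1"
  assumes f0: "f 0 0 = 0"
  shows "fps_X * assoc_rel (\<lambda>i j. fps_const (f i j) * fps_X ^ (i + j - 1)) p q r =
     fps_const (assoc_rel f p q r) * fps_X ^ (p + q + r)"
proof -
  let ?f' = "\<lambda>i j. fps_const (f i j) * (fps_X::'a fps) ^ (i + j - 1)"
  let ?N = "p + q + r"
  have r: "ring_hom_fn (scale3 :: 'a fps fps fps \<Rightarrow> _)"
    by (rule ring_hom_coeff_map3[OF ring_hom_fps_const])
  have c: "\<And>x. scale3 (const3 x) = const3 (fps_const x)"
    by (rule coeff_map3_const3[OF ring_hom_fps_const])
  note evh = ev_trunc_hom[OF r c]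
  note evs = ev_trunc_scale[of f, OF f0]
  have e1: "scale3 (ev_trunc ?N f U3 V3) = const3 fps_X * ev_trunc ?N ?f' U3 V3"
    by (simp add: evh scale3_U3 scale3_V3 evs)
  have e2: "scale3 (ev_trunc ?N f V3 W3) = const3 fps_X * ev_trunc ?N ?f' V3 W3"
    by (simp add: evh scale3_W3 scale3_V3 evs)
  have e3: "scale3 (ev_trunc ?N f (ev_trunc ?N f U3 V3) W3) =
      const3 fps_X * ev_trunc ?N ?f' (ev_trunc ?N ?f' U3 V3) W3"
    unfolding evh[of ?N f "ev_trunc ?N f U3 V3" W3] e1 scale3_W3 by (rule evs)
  have e4: "scale3 (ev_trunc ?N f U3 (ev_trunc ?N f V3 W3)) =
      const3 fps_X * ev_trunc ?N ?f' U3 (ev_trunc ?N ?f' V3 W3)"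
    unfolding evh[of ?N f U3 "ev_trunc ?N f V3 W3"] e2 scale3_U3 by (rule evs)
  have "fps_const (assoc_rel f p q r) * fps_X ^ ?N =
      coeff3 (scale3 (ev_trunc ?N f (ev_trunc ?N f U3 V3) W3)) p q r
    - coeff3 (scale3 (ev_trunc ?N f U3 (ev_trunc ?N f V3 W3))) p q r"
    by (simp add: assoc_rel_def Let_def coeff3_scale3 left_diff_distrib flip: fps_const_sub)
  also have "\<dots> = fps_X * assoc_rel ?f' p q r"
    unfolding e3 e4 by (simp add: assoc_rel_def Let_def right_diff_distrib)
  finally show ?thesis by simp
qed

section \<open>Two-variable series and the quotient defining F_b\<close>

abbreviation cdenom :: "'a::comm_ring_1 fps \<Rightarrow> 'a fps fps" where
  "cdenom c \<equiv> X1 * in_u2 c - X2 * in_u1 c"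

lemma ext2: "(\<And>i j. coeff2 S i j = coeff2 T i j) \<Longrightarrow> S = T"
  unfolding coeff2_def by (intro fps_ext) auto

lemma coeff2_add[simp]: "coeff2 (S + T) i j = coeff2 S i j + coeff2 T i j"
  by (simp add: coeff2_def)
lemma coeff2_diff[simp]: "coeff2 (S - T) i j = coeff2 S i j - coeff2 T i j"
  by (simp add: coeff2_def)
lemma coeff2_zero[simp]: "coeff2 0 i j = 0"
  by (simp add: coeff2_def)
lemma coeff2_one: "coeff2 1 i j = (if i = 0 \<and> j = 0 then 1 else 0)"
  by (simp add: coeff2_def)
lemma coeff2_X1_mult[simp]: "coeff2 (X1 * S) i j = (if i = 0 then 0 else coeff2 S (i - 1) j)"
  by (simp add: coeff2_def X1_def)
lemma coeff2_X2_mult[simp]: "coeff2 (X2 * S) i j = (if j = 0 then 0 else coeff2 S i (j - 1))"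
  by (simp add: coeff2_def X2_def)
lemma coeff2_const2_mult[simp]:
  "coeff2 (fps_const (fps_const (x::'a::comm_ring_1)) * S) i j = x * coeff2 S i j"
  by (simp add: coeff2_def)
lemma coeff2_mult_const2[simp]:
  "coeff2 (S * fps_const (fps_const (x::'a::comm_ring_1))) i j = coeff2 S i j * x"
  by (simp add: coeff2_def)
lemma coeff2_in_u1[simp]: "coeff2 (in_u1 f) i j = (if j = 0 then f $ i else 0)"
  by (simp add: coeff2_def in_u1_def)
lemma coeff2_in_u2[simp]: "coeff2 (in_u2 f) i j = (if i = 0 then f $ j else 0)"
  by (simp add: coeff2_def in_u2_def)
lemma coeff2_X1: "coeff2 (X1::'a::comm_ring_1 fps fps) i j = (if i = 1 \<and> j = 0 then 1 else 0)"
  using coeff2_X1_mult[of "1::'a fps fps" i j] by (auto simp: coeff2_one)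
lemma coeff2_X2: "coeff2 (X2::'a::comm_ring_1 fps fps) i j = (if i = 0 \<and> j = 1 then 1 else 0)"
  using coeff2_X2_mult[of "1::'a fps fps" i j] by (auto simp: coeff2_one)
lemma coeff2_const2: "coeff2 (fps_const (fps_const x)) i j = (if i = 0 \<and> j = 0 then x else 0)"
  by (simp add: coeff2_def)

definition divided_diff :: "'a::comm_ring_1 fps \<Rightarrow> 'a fps fps" where
  "divided_diff f = Abs_fps (\<lambda>i. Abs_fps (\<lambda>j. f $ (i + j + 1)))"

lemma coeff2_divided_diff[simp]: "coeff2 (divided_diff f) i j = f $ (i + j + 1)"
  by (simp add: divided_diff_def coeff2_def)

lemma divided_diff_eq: "(X1 - X2) * divided_diff f = in_u1 f - in_u2 f"
  by (rule ext2) (auto simp: algebra_simps)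

definition cofactor :: "'a::comm_ring_1 fps \<Rightarrow> 'a fps fps" where
  "cofactor c = in_u2 c - X2 * divided_diff c"

lemma cdenom_factor: "cdenom c = (X1 - X2) * cofactor c"
proof -
  have "(X1 - X2) * cofactor c = (X1 - X2) * in_u2 c - X2 * ((X1 - X2) * divided_diff c)"
    by (simp add: cofactor_def algebra_simps)
  also have "\<dots> = (X1 - X2) * in_u2 c - X2 * (in_u1 c - in_u2 c)"
    unfolding divided_diff_eq ..
  also have "\<dots> = cdenom c"
    by (simp add: algebra_simps)
  finally show ?thesis by simp
qed

lemma cofactor_const: assumes "c $ 0 = 1" shows "cofactor c $ 0 = 1"
proof (rule fps_ext)
  fix n
  show "cofactor c $ 0 $ n = 1 $ n"
    using assms by (cases n) (simp_all add: cofactor_def X2_def divided_diff_def in_u2_def)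
qed

lemma fps_mult_X_eq0: "g * fps_X = 0 \<Longrightarrow> g = (0::'a::comm_ring_1 fps)"
proof (rule fps_ext)
  fix n assume "g * fps_X = 0"
  then have "(g * fps_X) $ Suc n = 0" by simp
  then show "g $ n = 0 $ n" by simp
qed

lemma fps_X_cancel: "fps_X * u = fps_X * (v::'a::comm_ring_1 fps) \<Longrightarrow> u = v"
proof (rule fps_ext)
  fix n assume "fps_X * u = fps_X * v"
  then have "(fps_X * u) $ Suc n = (fps_X * v) $ Suc n" by simp
  then show "u $ n = v $ n" by simp
qed

lemma fps_X_times_eq_monom:
  assumes "0 < k" "fps_X * u = fps_const s * fps_X ^ k"
  shows "u = fps_const s * (fps_X::'a::comm_ring_1 fps) ^ (k - 1)"
proof (rule fps_X_cancel)
  have "(fps_X::'a fps) ^ k = fps_X * fps_X ^ (k - 1)" using assms(1) by (simp flip: power_Suc)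
  then show "fps_X * u = fps_X * (fps_const s * fps_X ^ (k - 1))" using assms(2) by (simp add: mult_ac)
qed

lemma cancel_X1_minus_X2:
  fixes Z :: "'a::comm_ring_1 fps fps"
  assumes "Z * (X1 - X2) = 0" shows "Z = 0"
proof -
  have eq: "(Z * X1) $ i = (Z * X2) $ i" for i
    using assms by (metis right_diff_distrib eq_iff_diff_eq_0)
  have zx: "(Z * X1) $ i = (if i = 0 then 0 else Z $ (i - 1))" for i
    by (simp add: X1_def mult.commute[of Z])
  have zy: "(Z * X2) $ i = Z $ i * fps_X" for i
    by (simp add: X2_def)
  have "Z $ i = 0" for i
  proof (induction i)
    case 0
    have "Z $ 0 * fps_X = 0" using eq[of 0] zx[of 0] zy[of 0] by simp
    then show ?case by (rule fps_mult_X_eq0)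
  next
    case (Suc i)
    have "Z $ Suc i * fps_X = 0" using eq[of "Suc i"] zx[of "Suc i"] zy[of "Suc i"] Suc by simp
    then show ?case by (rule fps_mult_X_eq0)
  qed
  then show ?thesis by (intro fps_ext) simp
qed

text \<open>Hence the denominator is cancellable, and it divides d(u1) - d(u2) for every d:
  the quotient in the definition of F_b exists and is unique.\<close>
lemma cdenom_cancel:
  fixes Z :: "'a::comm_ring_1 fps fps"
  assumes c0: "c $ 0 = 1" and Z: "Z * cdenom c = 0"
  shows "Z = 0"
proof -
  let ?Ei = "fps_right_inverse (cofactor c) 1"
  have inv: "cofactor c * ?Ei = 1" by (rule fps_right_inverse) (simp add: cofactor_const[OF c0])
  have "Z * (X1 - X2) = Z * (X1 - X2) * (cofactor c * ?Ei)" by (simp add: inv)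
  also have "\<dots> = (Z * cdenom c) * ?Ei" by (simp add: cdenom_factor mult_ac)
  also have "\<dots> = 0" using Z by simp
  finally show ?thesis by (rule cancel_X1_minus_X2)
qed

lemma cdenom_divides:
  fixes c d :: "'a::comm_ring_1 fps"
  assumes c0: "c $ 0 = 1"
  shows "\<exists>Q. Q * cdenom c = in_u1 d - in_u2 d"
proof -
  let ?Ei = "fps_right_inverse (cofactor c) 1"
  have inv: "cofactor c * ?Ei = 1" by (rule fps_right_inverse) (simp add: cofactor_const[OF c0])
  have "divided_diff d * ?Ei * cdenom c = (X1 - X2) * divided_diff d * (cofactor c * ?Ei)"
    by (simp add: cdenom_factor mult_ac)
  also have "\<dots> = in_u1 d - in_u2 d" by (simp add: inv divided_diff_eq)
  finally show ?thesis by blast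
qed

lemma c_fps_0: "c_fps $ 0 = 1" by (simp add: c_fps_def)

lemma Qb_spec: "Qb * cdenom c_fps = in_u1 d_fps - in_u2 d_fps"
proof -
  have ex1: "\<exists>!Q. Q * cdenom c_fps = in_u1 d_fps - in_u2 d_fps"
  proof (rule ex_ex1I)
    show "\<exists>Q. Q * cdenom c_fps = in_u1 d_fps - in_u2 d_fps"
      by (rule cdenom_divides[OF c_fps_0])
  next
    fix Q1 Q2
    assume "Q1 * cdenom c_fps = in_u1 d_fps - in_u2 d_fps"
      and "Q2 * cdenom c_fps = in_u1 d_fps - in_u2 d_fps"
    then have "(Q1 - Q2) * cdenom c_fps = 0"
      by (simp add: left_diff_distrib)
    then have "Q1 - Q2 = 0" by (rule cdenom_cancel[OF c_fps_0])
    then show "Q1 = Q2" by simp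
  qed
  show ?thesis unfolding Qb_def by (rule theI'[OF ex1])
qed

lemma c_fps_nth: "c_fps $ n = (if n = 0 then 1 else if n = 1 then 0 else Var (C (n - 2)))"
  by (simp add: c_fps_def)
lemma d_fps_nth: "d_fps $ n = (if n = 0 then 0 else Var (D (n - 1)))"
  by (simp add: d_fps_def)

lemma coeff2_Fb: "coeff2 Fb i j = (if i = 1 then c_fps $ j else 0) + (if j = 1 then c_fps $ i else 0)
   - (if i = 1 \<and> j = 1 then Var A else 0) - (if 2 \<le> i \<and> 2 \<le> j then coeff2 Qb (i - 2) (j - 2) else 0)"
proof -
  have eq: "Fb = X1 * in_u2 c_fps + X2 * in_u1 c_fps - fps_const (fps_const (Var A)) * (X1 * (X2 * 1))
     - X1 * (X1 * (X2 * (X2 * Qb)))"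
    by (simp add: Fb_def power2_eq_square mult_ac)
  show ?thesis
    unfolding eq by (auto simp: coeff2_one coeff2_X2 numeral_2_eq_2)
qed

text \<open>Comparing coefficients in Qb * denominator = d(u1) - d(u2) determines the first
  coefficients of Qb: Qb = d_1 + d_2 (u1 + u2) + ...\<close>
lemma coeff2_mult_in_u2: "coeff2 (Q * in_u2 c) i j = (\<Sum>k=0..j. coeff2 Q i k * c $ (j - k))"
proof -
  have "(Q * fps_const c) $ i = Q $ i * c" by simp
  then show ?thesis unfolding coeff2_def in_u2_def by (simp only: fps_mult_nth)
qed

lemma coeff2_mult_in_u1: "coeff2 (Q * in_u1 c) i j = (\<Sum>k=0..i. coeff2 Q k j * c $ (i - k))"
proof -
  have "(Q * in_u1 c) $ i = (\<Sum>k=0..i. Q $ k * fps_const (c $ (i - k)))"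
    by (simp add: fps_mult_nth in_u1_def)
  then show ?thesis unfolding coeff2_def by (simp add: fps_sum_nth)
qed

lemma coeff2_mult_cdenom: "coeff2 (Q * cdenom c) i j =
   (if i = 0 then 0 else (\<Sum>k=0..j. coeff2 Q (i - 1) k * c $ (j - k)))
 - (if j = 0 then 0 else (\<Sum>k=0..i. coeff2 Q k (j - 1) * c $ (i - k)))"
proof -
  have "Q * cdenom c = X1 * (Q * in_u2 c) - X2 * (Q * in_u1 c)"
    by (simp add: algebra_simps)
  then show ?thesis by (simp add: coeff2_mult_in_u2 coeff2_mult_in_u1)
qed

lemma coeff2_Qb_spec:
  "coeff2 (Qb * cdenom c_fps) i j = coeff2 (in_u1 d_fps - in_u2 d_fps) i j"
  by (simp only: Qb_spec)

lemma Qb_00: "coeff2 Qb 0 0 = Var (D 0)"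
  using coeff2_Qb_spec[of 1 0] by (simp add: coeff2_mult_cdenom c_fps_nth d_fps_nth)

lemma Qb_10: "coeff2 Qb 1 0 = Var (D 1)"
  using coeff2_Qb_spec[of 2 0] by (simp add: coeff2_mult_cdenom c_fps_nth d_fps_nth)

lemma Qb_01: "coeff2 Qb 0 1 = Var (D 1)"
  using coeff2_Qb_spec[of 0 2] by (simp add: coeff2_mult_cdenom c_fps_nth d_fps_nth)

section \<open>Homogeneity of the coefficients of F_b\<close>

text \<open>The coefficient b_ij of F_b is homogeneous of
  weight i+j-1 precisely when grading F_b equals F_b(t u1, t u2) / t.\<close>

definition gradeR1 :: "rvar mpoly fps \<Rightarrow> rvar mpoly fps fps" where
  "gradeR1 = coeff_map 1 (grade wtR)"
definition gradeR2 :: "rvar mpoly fps fps \<Rightarrow> rvar mpoly fps fps fps" where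
  "gradeR2 = coeff_map 1 gradeR1"
definition scale1 :: "'a::comm_ring_1 fps \<Rightarrow> 'a fps fps" where
  "scale1 = coeff_map fps_X fps_const"
definition scale2 :: "'a::comm_ring_1 fps fps \<Rightarrow> 'a fps fps fps" where
  "scale2 = coeff_map (fps_const fps_X) scale1"

lemma ring_hom_gradeR1: "ring_hom_fn gradeR1"
  unfolding gradeR1_def by (intro ring_hom_coeff_map ring_hom_grade)
lemma ring_hom_gradeR2: "ring_hom_fn gradeR2"
  unfolding gradeR2_def by (intro ring_hom_coeff_map ring_hom_gradeR1)
lemma ring_hom_scale1: "ring_hom_fn scale1"
  unfolding scale1_def by (intro ring_hom_coeff_map ring_hom_fps_const)
lemma ring_hom_scale2: "ring_hom_fn scale2"
  unfolding scale2_def by (intro ring_hom_coeff_map ring_hom_scale1)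

lemma gradeR1_nth[simp]: "gradeR1 f $ n = grade wtR (f $ n)" by (simp add: gradeR1_def)
lemma scale1_nth[simp]: "scale1 f $ n = fps_const (f $ n) * fps_X ^ n" by (simp add: scale1_def)
lemma coeff2_gradeR2[simp]: "coeff2 (gradeR2 S) i j = grade wtR (coeff2 S i j)"
  by (simp add: gradeR2_def coeff2_def)
lemma coeff2_scale2[simp]: "coeff2 (scale2 S) i j = fps_const (coeff2 S i j) * fps_X ^ (i + j)"
  by (simp add: scale2_def coeff2_def fps_const_power power_add mult_ac)

abbreviation tX :: "'a::comm_ring_1 fps fps fps" where "tX \<equiv> fps_const (fps_const fps_X)"

lemma gradeR2_X1: "gradeR2 X1 = X1" by (rule ext2) (simp add: coeff2_X1)
lemma gradeR2_X2: "gradeR2 X2 = X2" by (rule ext2) (simp add: coeff2_X2)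
lemma scale2_X1: "scale2 X1 = tX * X1" by (rule ext2) (simp add: coeff2_X1)
lemma scale2_X2: "scale2 X2 = tX * X2" by (rule ext2) (simp add: coeff2_X2)
lemma gradeR2_in_u1: "gradeR2 (in_u1 f) = in_u1 (gradeR1 f)" by (rule ext2) simp
lemma gradeR2_in_u2: "gradeR2 (in_u2 f) = in_u2 (gradeR1 f)" by (rule ext2) simp
lemma scale2_in_u1: "scale2 (in_u1 f) = in_u1 (scale1 f)" by (rule ext2) simp
lemma scale2_in_u2: "scale2 (in_u2 f) = in_u2 (scale1 f)" by (rule ext2) simp
lemma gradeR2_const2: "gradeR2 (fps_const (fps_const x)) = fps_const (fps_const (grade wtR x))"
  by (rule ext2) (simp add: coeff2_const2)
lemma scale2_const2: "scale2 (fps_const (fps_const x)) = fps_const (fps_const (fps_const x))"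
  by (rule ext2) (simp add: coeff2_const2)
lemma in_u1_const: "in_u1 (fps_const k * g) = fps_const (fps_const k) * in_u1 (g::'a::comm_ring_1 fps)"
  by (rule ext2) simp
lemma in_u2_const: "in_u2 (fps_const k * g) = fps_const (fps_const k) * in_u2 (g::'a::comm_ring_1 fps)"
  by (rule ext2) simp

lemma gradeR1_c: "gradeR1 c_fps = scale1 c_fps"
proof (rule fps_ext)
  fix n show "gradeR1 c_fps $ n = scale1 c_fps $ n"
  proof (cases "n \<le> 1")
    case True then show ?thesis by (auto simp: c_fps_nth grade_Var le_Suc_eq)
  next
    case False
    then obtain m where m: "n = Suc (Suc m)" by (metis Suc_le_D not_less_eq_eq One_nat_def)
    then show ?thesis by (simp add: c_fps_nth grade_Var)
  qed
qed

lemma gradeR1_d: "gradeR1 d_fps = fps_const (fps_X ^ 2) * scale1 d_fps"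
proof (rule fps_ext)
  fix n show "gradeR1 d_fps $ n = (fps_const (fps_X ^ 2) * scale1 d_fps) $ n"
    by (cases "n = 0") (auto simp: d_fps_nth grade_Var power2_eq_square mult_ac)
qed

lemma gradeR1_c0: "gradeR1 c_fps $ 0 = 1" by (simp add: c_fps_nth)

text \<open>The coefficient of u1^i u2^j in Qb has weight i+j+3; this follows by cancelling the
  denominator in the defining equation of Qb.\<close>
lemma gradeR2_Qb: "gradeR2 Qb = scale2 Qb * tX ^ 3"
proof -
  interpret L: ring_hom_fn gradeR2 by (rule ring_hom_gradeR2)
  interpret T: ring_hom_fn scale2 by (rule ring_hom_scale2)
  define Dc where "Dc = cdenom c_fps"
  define Nd where "Nd = in_u1 d_fps - in_u2 d_fps"
  have hL: "gradeR2 Dc = cdenom (gradeR1 c_fps)"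
    by (simp add: Dc_def L.h_diff L.h_mult gradeR2_X1 gradeR2_X2 gradeR2_in_u1 gradeR2_in_u2)
  have hT': "scale2 Dc = tX * (cdenom (gradeR1 c_fps))"
    by (simp add: Dc_def T.h_diff T.h_mult scale2_X1 scale2_X2 scale2_in_u1 scale2_in_u2 hL gradeR1_c
        algebra_simps)
  have hT: "scale2 Dc = tX * gradeR2 Dc" by (simp only: hT' hL)
  have hN: "gradeR2 Nd = tX ^ 2 * scale2 Nd"
    by (simp add: Nd_def L.h_diff T.h_diff gradeR2_in_u1 gradeR2_in_u2 scale2_in_u1 scale2_in_u2
        gradeR1_d in_u1_const in_u2_const right_diff_distrib)
  have QD: "Qb * Dc = Nd" unfolding Dc_def Nd_def by (rule Qb_spec)
  have "(gradeR2 Qb - scale2 Qb * tX ^ 3) * gradeR2 Dc =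
      gradeR2 (Qb * Dc) - tX ^ 2 * (scale2 Qb * scale2 Dc)"
    by (simp add: L.h_mult hT algebra_simps power3_eq_cube power2_eq_square)
  also have "\<dots> = 0" by (simp add: QD T.h_mult[symmetric] hN)
  finally have "(gradeR2 Qb - scale2 Qb * tX ^ 3) * (cdenom (gradeR1 c_fps)) = 0"
    by (simp only: hL[symmetric])
  then have "gradeR2 Qb - scale2 Qb * tX ^ 3 = 0" by (rule cdenom_cancel[OF gradeR1_c0])
  then show ?thesis by simp
qed

lemma gradeR2_Fb: "gradeR2 Fb * tX = scale2 Fb"
proof -
  interpret L: ring_hom_fn gradeR2 by (rule ring_hom_gradeR2)
  interpret T: ring_hom_fn scale2 by (rule ring_hom_scale2)
  have k: "fps_const (fps_const (grade wtR (Var A))) = fps_const (fps_const (fps_const (Var A))) * tX"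
    by (simp add: grade_Var)
  have e1: "gradeR2 Fb = X1 * in_u2 (scale1 c_fps) + X2 * in_u1 (scale1 c_fps)
      - fps_const (fps_const (fps_const (Var A))) * tX * X1 * X2 - scale2 Qb * tX ^ 3 * X1 ^ 2 * X2 ^ 2"
    unfolding Fb_def
    by (simp add: L.h_diff L.h_add L.h_mult L.h_power gradeR2_X1 gradeR2_X2 gradeR2_in_u1 gradeR2_in_u2
        gradeR2_const2 k gradeR1_c gradeR2_Qb)
  have e2: "scale2 Fb = tX * X1 * in_u2 (scale1 c_fps) + tX * X2 * in_u1 (scale1 c_fps)
      - fps_const (fps_const (fps_const (Var A))) * (tX * X1) * (tX * X2)
      - scale2 Qb * (tX * X1) ^ 2 * (tX * X2) ^ 2"
    unfolding Fb_def
    by (simp add: T.h_diff T.h_add T.h_mult T.h_power scale2_X1 scale2_X2 scale2_in_u1 scale2_in_u2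
        scale2_const2)
  show ?thesis unfolding e1 e2
    by (simp add: algebra_simps eval_nat_numeral)
qed

lemma b00: "b 0 0 = 0" by (simp add: b_def coeff2_Fb c_fps_nth)

lemma b_weight: "grade wtR (b i j) = fps_const (b i j) * fps_X ^ (i + j - 1)"
proof (cases "i + j = 0")
  case True then show ?thesis by (simp add: b00)
next
  case False
  have "coeff2 (gradeR2 Fb * tX) i j = coeff2 (scale2 Fb) i j" by (simp only: gradeR2_Fb)
  then have "fps_X * grade wtR (b i j) = fps_const (b i j) * fps_X ^ (i + j)"
    by (simp add: b_def mult.commute)
  then show ?thesis using False by (intro fps_X_times_eq_monom) simp_all
qed

lemma assoc_rel_b_weight:
  "grade wtR (assoc_rel b p q r) = fps_const (assoc_rel b p q r) * fps_X ^ (p + q + r - 1)"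
proof (cases "p + q + r = 0")
  case True
  then show ?thesis by (simp add: assoc_rel_def ev_trunc_def b00)
next
  case False
  have "grade wtR (assoc_rel b p q r) = assoc_rel (\<lambda>i j. grade wtR (b i j)) p q r"
    by (rule assoc_rel_hom[OF ring_hom_grade])
  also have "\<dots> = assoc_rel (\<lambda>i j. fps_const (b i j) * fps_X ^ (i + j - 1)) p q r"
    by (simp add: b_weight)
  finally have "fps_X * grade wtR (assoc_rel b p q r) =
      fps_const (assoc_rel b p q r) * fps_X ^ (p + q + r)"
    using assoc_rel_scale[of b, OF b00] by simp
  then show ?thesis using False by (intro fps_X_times_eq_monom) simp_all
qed

lemma kv_homog:
  assumes "homog wtL n p"
  shows "homog wtR n (kv p)"
proof -
  have "grade wtR (kv p) = subst (\<lambda>v. grade wtR (case v of (i, j) \<Rightarrow> b (i + 1) (j + 1))) p"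
    unfolding kv_def by (rule ring_hom_fn.h_subst[OF ring_hom_grade])
  also have "\<dots> = subst (\<lambda>v. fps_const (case v of (i, j) \<Rightarrow> b (i + 1) (j + 1)) * fps_X ^ wtL v) p"
    by (intro subst_cong) (auto simp: b_weight)
  also have "\<dots> = fps_const (kv p) * fps_X ^ n"
    unfolding kv_def by (rule subst_scaled_homog[OF assms])
  finally show ?thesis by (simp add: homog_iff_grade)
qed

section \<open>An inverse of the Krichever genus in low weights\<close>

text \<open>theta: a |-> -x_11, c_(j+2) |-> x_(1,j+2), d_(k+1) |-> -x_(2,k+2)
  (recall that Var (i, j) stands for x_(i+1,j+1)).\<close>
fun theta :: "rvar \<Rightarrow> (nat \<times> nat) mpoly" where
  "theta A = - Var (0, 0)"
| "theta (C j) = Var (0, j + 1)"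
| "theta (D k) = - Var (1, k + 1)"

definition sym_rep :: "nat \<times> nat \<Rightarrow> (nat \<times> nat) mpoly" where
  "sym_rep v = Var (min (fst v) (snd v), max (fst v) (snd v))"

lemma subst_theta_simps:
  "subst theta 0 = 0" "subst theta 1 = 1" "subst theta (x + y) = subst theta x + subst theta y"
  "subst theta (x - y) = subst theta x - subst theta y" "subst theta (- x) = - subst theta x"
  "subst theta (Var v) = theta v"
  using ring_hom_subst[of theta]
  by (simp_all add: ring_hom_fn.h_zero ring_hom_fn.h_one ring_hom_fn.h_add ring_hom_fn.h_diff
      ring_hom_fn.h_uminus subst_Var)

lemma subst_sym_rep_simps:
  "subst sym_rep 0 = 0" "subst sym_rep 1 = 1" "subst sym_rep (Var v) = sym_rep v"
  using ring_hom_subst[of sym_rep]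
  by (simp_all add: ring_hom_fn.h_zero ring_hom_fn.h_one subst_Var)

lemma b_formula: "b i j = (if i = 1 then c_fps $ j else 0) + (if j = 1 then c_fps $ i else 0)
   - (if i = 1 \<and> j = 1 then Var A else 0) - (if 2 \<le> i \<and> 2 \<le> j then coeff2 Qb (i - 2) (j - 2) else 0)"
  by (simp add: b_def coeff2_Fb)

lemma theta_b_low:
  assumes "i + j \<le> 5"
  shows "subst theta (b i j) = subst sym_rep (gL i j)"
proof -
  consider "i = 0" | "j = 0" | "i = 1" "j \<noteq> 0" | "j = 1" "i \<ge> 2"
    | "i = 2" "j = 2" | "i = 2" "j = 3" | "i = 3" "j = 2"
    using assms by linarith
  then show ?thesis
  proof cases
    case 1 then show ?thesis
      by (cases "j = 1") (simp_all add: b_formula c_fps_nth gL_def subst_theta_simps subst_sym_rep_simps)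
  next
    case 2 then show ?thesis
      by (cases "i = 1") (simp_all add: b_formula c_fps_nth gL_def subst_theta_simps subst_sym_rep_simps)
  next
    case 3 then show ?thesis
      by (cases "j = 1") (auto simp: b_formula c_fps_nth gL_def subst_theta_simps subst_sym_rep_simps
          sym_rep_def Suc_diff_Suc numeral_2_eq_2)
  next
    case 4 then show ?thesis
      by (auto simp: b_formula c_fps_nth gL_def subst_theta_simps subst_sym_rep_simps sym_rep_def
          Suc_diff_Suc numeral_2_eq_2)
  next
    case 5 then show ?thesis
      by (simp add: b_formula gL_def subst_theta_simps subst_sym_rep_simps sym_rep_def Qb_00)
  next
    case 6 then show ?thesis
      by (simp add: b_formula gL_def subst_theta_simps subst_sym_rep_simps sym_rep_def
          Qb_01[unfolded One_nat_def])
  next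
    case 7 then show ?thesis
      by (simp add: b_formula gL_def subst_theta_simps subst_sym_rep_simps sym_rep_def
          Qb_10[unfolded One_nat_def])
  qed
qed

lemma sym_rep_cong: "subst sym_rep y - y \<in> I_Laz"
proof -
  have "sym_rep v - Var v \<in> I_Laz" for v
  proof (cases "fst v \<le> snd v")
    case True then show ?thesis by (simp add: sym_rep_def gen_ideal_0 I_Laz_def)
  next
    case False
    then have "sym_rep v - Var v = Var (snd v, fst v) - Var (fst v, snd v)"
      by (simp add: sym_rep_def)
    also have "\<dots> \<in> I_Laz" unfolding I_Laz_def by (rule gen_ideal_gen) blast
    finally show ?thesis .
  qed
  then have "subst sym_rep y - subst Var y \<in> I_Laz"
    unfolding I_Laz_def by (intro subst_cong_ideal) simp
  then show ?thesis by (simp add: subst_Var_id)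
qed

lemma theta_assoc_rel:
  assumes "p + q + r \<le> 5"
  shows "subst theta (assoc_rel b p q r) \<in> I_Laz"
proof -
  have "subst theta (assoc_rel b p q r) = assoc_rel (\<lambda>i j. subst theta (b i j)) p q r"
    by (rule assoc_rel_hom[OF ring_hom_subst])
  also have "\<dots> = assoc_rel (\<lambda>i j. subst sym_rep (gL i j)) p q r"
    using assms by (intro assoc_rel_low) (simp_all add: b00 gL_def subst_theta_simps
        subst_sym_rep_simps theta_b_low)
  also have "\<dots> = subst sym_rep (assoc_rel gL p q r)"
    by (rule assoc_rel_hom[OF ring_hom_subst, symmetric])
  finally have eq: "subst theta (assoc_rel b p q r) = subst sym_rep (assoc_rel gL p q r)" .
  have "assoc_rel gL p q r \<in> I_Laz"
    unfolding I_Laz_def by (rule gen_ideal_gen) (auto intro: range_eqI[where x="(p, q, r)"])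
  then have "(subst sym_rep (assoc_rel gL p q r) - assoc_rel gL p q r) + assoc_rel gL p q r \<in> I_Laz"
    using sym_rep_cong unfolding I_Laz_def by (intro gen_ideal_add)
  then show ?thesis by (simp add: eq)
qed

lemma theta_J_low:
  assumes "x \<in> J" "homog wtR n x" "n \<le> 4"
  shows "subst theta x \<in> I_Laz"
proof -
  let ?rel = "\<lambda>(p, q, r). assoc_rel b p q r" and ?deg = "\<lambda>(p, q, r). p + q + r - 1"
  have "x \<in> gen_ideal (?rel ` {i. ?deg i \<le> n})"
  proof (rule homog_in_graded_ideal[OF ring_hom_grade])
    show "grade wtR (?rel i) = fps_const (?rel i) * fps_X ^ ?deg i" for i
      by (cases i) (simp add: assoc_rel_b_weight)
    show "grade wtR x = fps_const x * fps_X ^ n" using assms(2) by (simp add: homog_iff_grade)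
    show "x \<in> gen_ideal (range ?rel)" using assms(1) by (simp add: J_def assoc_ideal_def)
  qed
  then show ?thesis
    unfolding I_Laz_def
    by (rule ring_hom_fn.h_gen_ideal[OF ring_hom_subst, rotated])
       (use assms(3) theta_assoc_rel in \<open>auto simp: I_Laz_def\<close>)
qed

lemma ring_hom_kv: "ring_hom_fn kv"
  unfolding kv_def by (rule ring_hom_subst)

lemma kv_Var: "kv (Var (i, j)) = b (i + 1) (j + 1)"
  by (simp add: kv_def subst_Var)

lemma kv_theta: "wtR v \<le> 4 \<Longrightarrow> kv (theta v) = Var v"
proof (cases v)
  case A then show ?thesis
    by (simp add: ring_hom_fn.h_uminus[OF ring_hom_kv] kv_Var b_formula c_fps_nth)
next
  case (C j) then show ?thesis
    by (simp add: kv_Var b_formula c_fps_nth)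
next
  case (D k)
  assume "wtR v \<le> 4"
  then have "k = 0 \<or> k = 1" using D by auto
  then show ?thesis using D
    by (auto simp: ring_hom_fn.h_uminus[OF ring_hom_kv] kv_Var b_formula
        c_fps_nth Qb_00 Qb_01[unfolded One_nat_def])
qed

lemma theta_homog:
  assumes q: "homog wtR n q"
  shows "homog wtL n (subst theta q)"
proof -
  have theta_weight: "grade wtL (theta v) = fps_const (theta v) * fps_X ^ wtR v" for v
    by (cases v) (auto simp: ring_hom_fn.h_uminus[OF ring_hom_grade] grade_Var power_add
        eval_nat_numeral mult_ac simp flip: fps_const_neg)
  have "grade wtL (subst theta q) = subst (\<lambda>v. grade wtL (theta v)) q"
    by (rule ring_hom_fn.h_subst[OF ring_hom_grade])
  also have "\<dots> = fps_const (subst theta q) * fps_X ^ n"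
    unfolding theta_weight by (rule subst_scaled_homog[OF q])
  finally show ?thesis by (simp add: homog_iff_grade)
qed

lemma theta_kv_cong:
  assumes p: "homog wtL n p" and n: "n \<le> 4"
  shows "subst theta (kv p) - p \<in> I_Laz"
proof -
  have "subst theta (kv p) = subst (\<lambda>v. subst theta (case v of (i, j) \<Rightarrow> b (i + 1) (j + 1))) p"
    unfolding kv_def by (rule ring_hom_fn.h_subst[OF ring_hom_subst])
  moreover have "subst (\<lambda>v. subst theta (case v of (i, j) \<Rightarrow> b (i + 1) (j + 1))) p - subst Var p
      \<in> I_Laz"
    unfolding I_Laz_def
  proof (rule subst_cong_ideal, fold I_Laz_def)
    fix m v assume "m \<in> Poly_Mapping.keys p" "v \<in> Poly_Mapping.keys m"
    then have w: "wtL v \<le> n" by (rule homog_var_le[OF p])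
    obtain i j where v: "v = (i, j)" by (cases v)
    have "subst theta (b (i + 1) (j + 1)) = subst sym_rep (gL (i + 1) (j + 1))"
      using w n v by (intro theta_b_low) simp
    also have "\<dots> = subst sym_rep (Var v)" by (simp add: gL_def v)
    finally show "subst theta (case v of (i, j) \<Rightarrow> b (i + 1) (j + 1)) - Var v \<in> I_Laz"
      using sym_rep_cong[of "Var v"] v by simp
  qed
  ultimately show ?thesis by (simp add: subst_Var_id)
qed

lemma kv_surjective_low:
  assumes n: "n \<le> 4" and q: "homog wtR n q"
  shows "\<exists>p. homog wtL n p \<and> kv p - q \<in> J"
proof (intro exI conjI)
  show "homog wtL n (subst theta q)" by (rule theta_homog[OF q])
  have "kv (subst theta q) = subst (\<lambda>v. kv (theta v)) q"
    by (rule ring_hom_fn.h_subst[OF ring_hom_kv])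
  also have "\<dots> = subst Var q"
  proof (rule subst_cong)
    fix m v assume "m \<in> Poly_Mapping.keys q" "v \<in> Poly_Mapping.keys m"
    then have "wtR v \<le> n" by (rule homog_var_le[OF q])
    then show "kv (theta v) = Var v" using n by (intro kv_theta) simp
  qed
  also have "\<dots> = q" by (rule subst_Var_id)
  finally show "kv (subst theta q) - q \<in> J" by (simp add: J_def assoc_ideal_def gen_ideal_0)
qed

lemma kv_injective_low:
  assumes n: "n \<le> 4" and p: "homog wtL n p" and kvJ: "kv p \<in> J"
  shows "p \<in> I_Laz"
proof -
  have "subst theta (kv p) \<in> I_Laz" by (rule theta_J_low[OF kvJ kv_homog[OF p] n])
  moreover have "subst theta (kv p) - p \<in> I_Laz" by (rule theta_kv_cong[OF p n])
  ultimately have "subst theta (kv p) - (subst theta (kv p) - p) \<in> I_Laz"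
    unfolding I_Laz_def by (rule gen_ideal_diff)
  then show ?thesis by simp
qed

theorem corollary6p2:
  fixes i :: nat
  assumes "2 * i < 10"
  shows "kv_iso_in_degree i"
proof -
  have "i \<le> 4" using assms by simp
  then show ?thesis
    unfolding kv_iso_in_degree_def using kv_surjective_low kv_injective_low by blast
qed

end
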